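(* Let $\mathsf{\Sigma}\in\mathbb{R}^{N\times N_S}$ and $\mathsf{\Lambda}\in\mathbb{R}^{N\times N_L}$ be the Star-to-RWG and Loop-to-RWG matrices of a triangular surface mesh, and let $\mathsf{\Sigma}_n=\mathsf{\Sigma}(\mathsf{\Sigma}^{\mathrm T}\mathsf{\Sigma})^+(\mathsf{\Sigma}^{\mathrm T}\mathsf{\Sigma})_n$ and $\mathsf{\Lambda}_n=\mathsf{\Lambda}(\mathsf{\Lambda}^{\mathrm T}\mathsf{\Lambda})^+(\mathsf{\Lambda}^{\mathrm T}\mathsf{\Lambda})_n$ be the filtered Star and Loop matrices (see context). Then for integers $1\le m<n<p<q\le N_S$, $$(\mathsf{\Sigma}_m-\mathsf{\Sigma}_n)^{\mathrm T}(\mathsf{\Sigma}_p-\mathsf{\Sigma}_q)=\mathsf{0},$$ and for integers $1\le m<n<p<q\le N_L$, $$(\mathsf{\Lambda}_m-\mathsf{\Lambda}_n)^{\mathrm T}(\mathsf{\Lambda}_p-\mathsf{\Lambda}_q)=\mathsf{0}.$$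
   Context: Consider a closed triangulated surface with $N$ edges, $N_S$ triangles and $N_L$ vertices. Each edge $m$ is shared by two triangles $c_m^+$, $c_m^-$. $[\mathsf{\Sigma}]_{mn}=1$ if cell $n$ is $c_m^+$, $-1$ if cell $n$ is $c_m^-$, $0$ otherwise. $[\mathsf{\Lambda}]_{mn}=\pm1$ when vertex $n$ is an endpoint of edge $m$ (opposite signs for the two endpoints, fixed by the orientation convention), $0$ otherwise. $^+$ denotes the Moore–Penrose pseudo-inverse. For $\mathsf{X}\in\{\mathsf{\Sigma},\mathsf{\Lambda}\}$ with $N_x$ columns, fix an SVD $\mathsf{X}=\mathsf{U}_X\mathsf{S}_X\mathsf{V}_X^{\mathrm T}$ with $\mathsf{V}_X$ orthogonal $N_x\times N_x$ and singular values $\sigma_{X,1}\ge\dots\ge\sigma_{X,N_x}\ge0$, so $\mathsf{X}^{\mathrm T}\mathsf{X}=\mathsf{V}_X\mathrm{diag}(\sigma_{X,i}^2)\mathsf{V}_X^{\mathrm T}$. For $1\le n\le N_x$, $\mathsf{L}_{X,n}$ is diagonal with $[\mathsf{L}_{X,n}]_{ii}=\sigma_{X,i}$ if $i>N_x-n$ and $0$ otherwise, and $(\mathsf{X}^{\mathrm T}\mathsf{X})_n=\mathsf{V}_X\mathsf{L}_{X,n}^2\mathsf{V}_X^{\mathrm T}$. *)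

theory Defs
  imports "Jordan_Normal_Form.Matrix"
begin

text \<open>Edges are indexed 0..<N, cells (triangles) 0..<NS, vertices 0..<NL.
  Edge m has cells cp m (= c_m^+) and cm m (= c_m^-), and endpoints va m, vb m
  (orientation convention: +1 at va m, -1 at vb m).\<close>

definition star_mat :: "nat \<Rightarrow> nat \<Rightarrow> (nat \<Rightarrow> nat) \<Rightarrow> (nat \<Rightarrow> nat) \<Rightarrow> real mat" where
  "star_mat N NS cp cm = mat N NS (\<lambda>(m, n). if n = cp m then 1 else if n = cm m then -1 else 0)"

definition loop_mat :: "nat \<Rightarrow> nat \<Rightarrow> (nat \<Rightarrow> nat) \<Rightarrow> (nat \<Rightarrow> nat) \<Rightarrow> real mat" where
  "loop_mat N NL va vb = mat N NL (\<lambda>(m, n). if n = va m then 1 else if n = vb m then -1 else 0)"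

definition closed_tri_mesh ::
  "nat \<Rightarrow> nat \<Rightarrow> nat \<Rightarrow> (nat \<Rightarrow> nat) \<Rightarrow> (nat \<Rightarrow> nat) \<Rightarrow> (nat \<Rightarrow> nat) \<Rightarrow> (nat \<Rightarrow> nat) \<Rightarrow> bool" where
  "closed_tri_mesh N NS NL cp cm va vb \<longleftrightarrow>
     (\<forall>m<N. cp m < NS \<and> cm m < NS \<and> cp m \<noteq> cm m \<and> va m < NL \<and> vb m < NL \<and> va m \<noteq> vb m) \<and>
     (\<forall>c<NS. card {m. m < N \<and> (cp m = c \<or> cm m = c)} = 3) \<and>
     (\<forall>v<NL. \<exists>m<N. va m = v \<or> vb m = v)"

definition penrose :: "real mat \<Rightarrow> real mat \<Rightarrow> bool" where
  "penrose A B \<longleftrightarrow> B \<in> carrier_mat (dim_col A) (dim_row A) \<and>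
     A * B * A = A \<and> B * A * B = B \<and>
     transpose_mat (A * B) = A * B \<and> transpose_mat (B * A) = B * A"

definition pinv :: "real mat \<Rightarrow> real mat" where
  "pinv A = (THE B. penrose A B)"

definition diag_rect :: "nat \<Rightarrow> nat \<Rightarrow> (nat \<Rightarrow> real) \<Rightarrow> real mat" where
  "diag_rect r c d = mat r c (\<lambda>(i, j). if i = j then d i else 0)"

definition orthogonal_mat :: "nat \<Rightarrow> real mat \<Rightarrow> bool" where
  "orthogonal_mat k Q \<longleftrightarrow> Q \<in> carrier_mat k k \<and> Q * transpose_mat Q = 1\<^sub>m k \<and>
     transpose_mat Q * Q = 1\<^sub>m k"

text \<open>X = U S V^T is an SVD of X; singular values are indexed from 0:
  \<sigma> i is the paper's \<sigma>_{X,i+1}.\<close>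
definition is_svd :: "real mat \<Rightarrow> real mat \<Rightarrow> (nat \<Rightarrow> real) \<Rightarrow> real mat \<Rightarrow> bool" where
  "is_svd X U \<sigma> V \<longleftrightarrow>
     orthogonal_mat (dim_row X) U \<and> orthogonal_mat (dim_col X) V \<and>
     (\<forall>i j. i \<le> j \<longrightarrow> j < dim_col X \<longrightarrow> \<sigma> j \<le> \<sigma> i) \<and>
     (\<forall>i < dim_col X. 0 \<le> \<sigma> i) \<and>
     X = U * diag_rect (dim_row X) (dim_col X) \<sigma> * transpose_mat V"

text \<open>L_{X,n}: diagonal with (1-based) entry i equal to \<sigma>_i if i > N_x - n, else 0.
  In 0-based indexing: entry i is \<sigma> i if i \<ge> N_x - n.\<close>
definition L_mat :: "nat \<Rightarrow> (nat \<Rightarrow> real) \<Rightarrow> nat \<Rightarrow> real mat" where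
  "L_mat Nx \<sigma> n = diag_rect Nx Nx (\<lambda>i. if Nx - n \<le> i then \<sigma> i else 0)"

definition gram_trunc :: "real mat \<Rightarrow> (nat \<Rightarrow> real) \<Rightarrow> real mat \<Rightarrow> nat \<Rightarrow> real mat" where
  "gram_trunc X \<sigma> V n = V * (L_mat (dim_col X) \<sigma> n * L_mat (dim_col X) \<sigma> n) * transpose_mat V"

definition filtered :: "real mat \<Rightarrow> (nat \<Rightarrow> real) \<Rightarrow> real mat \<Rightarrow> nat \<Rightarrow> real mat" where
  "filtered X \<sigma> V n = X * pinv (transpose_mat X * X) * gram_trunc X \<sigma> V n"

end

theory Submission
  imports Defs
begin

text \<open>If \<open>X = U S V\<^sup>T\<close> with \<open>U\<close>, \<open>V\<close> orthogonal and \<open>S\<close> diagonal, then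
  \<open>X\<^sup>T X = V (S\<^sup>T S) V\<^sup>T\<close> has pseudo-inverse \<open>V (S\<^sup>T S)\<^sup>+ V\<^sup>T\<close>, so the filtered
  matrix \<open>X\<^sub>k\<close> is \<open>U S\<^sub>k V\<^sup>T\<close>, where \<open>S\<^sub>k\<close> keeps the \<open>k\<close> last singular values and zeroes
  the others. Thus \<open>X\<^sub>m - X\<^sub>n\<close> and \<open>X\<^sub>p - X\<^sub>q\<close> are \<open>U D V\<^sup>T\<close> and \<open>U E V\<^sup>T\<close> with
  diagonal \<open>D\<close>, \<open>E\<close> supported on the disjoint index windows \<open>[N\<^sub>x - n, N\<^sub>x - m)\<close> and
  \<open>[N\<^sub>x - q, N\<^sub>x - p)\<close>, and \<open>(U D V\<^sup>T)\<^sup>T (U E V\<^sup>T) = V D\<^sup>T E V\<^sup>T = 0\<close>.\<close>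

lemma diag_rect_carrier [simp]: "diag_rect r c d \<in> carrier_mat r c"
  by (simp add: diag_rect_def)

lemma dim_diag_rect [simp]: "dim_row (diag_rect r c d) = r" "dim_col (diag_rect r c d) = c"
  by (simp_all add: diag_rect_def)

lemma diag_rect_cong:
  "(\<And>i. i < r \<Longrightarrow> i < c \<Longrightarrow> d i = e i) \<Longrightarrow> diag_rect r c d = diag_rect r c e"
  by (rule eq_matI) (auto simp: diag_rect_def)

lemma transpose_diag_rect: "transpose_mat (diag_rect r c d) = diag_rect c r d"
  by (rule eq_matI) (auto simp: diag_rect_def)

lemma diag_rect_minus: "diag_rect r c d - diag_rect r c e = diag_rect r c (\<lambda>i. d i - e i)"
  by (rule eq_matI) (auto simp: diag_rect_def)

lemma diag_rect_mult:
  "diag_rect r k d * diag_rect k c e = diag_rect r c (\<lambda>i. if i < k then d i * e i else 0)"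
proof (rule eq_matI)
  fix i j assume "i < dim_row (diag_rect r c (\<lambda>i. if i < k then d i * e i else 0))"
    and "j < dim_col (diag_rect r c (\<lambda>i. if i < k then d i * e i else 0))"
  then have ij: "i < r" "j < c" by (auto simp: diag_rect_def)
  have "(diag_rect r k d * diag_rect k c e) $$ (i, j)
      = (\<Sum>l<k. (if i = l then d i else 0) * (if l = j then e l else 0))"
    using ij by (simp add: diag_rect_def scalar_prod_def lessThan_atLeast0)
  also have "\<dots> = (\<Sum>l<k. if l = i then (if i = j then d i * e i else 0) else 0)"
    by (rule sum.cong) auto
  also have "\<dots> = diag_rect r c (\<lambda>i. if i < k then d i * e i else 0) $$ (i, j)"
    using ij by (simp add: diag_rect_def)
  finally show "(diag_rect r k d * diag_rect k c e) $$ (i, j)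
      = diag_rect r c (\<lambda>i. if i < k then d i * e i else 0) $$ (i, j)" .
qed (auto simp: diag_rect_def)

lemma transpose_sandwich:
  fixes U E W :: "'a::comm_ring_1 mat"
  assumes "U \<in> carrier_mat a b" "E \<in> carrier_mat b c" "W \<in> carrier_mat d c"
  shows "transpose_mat (U * E * transpose_mat W) = W * transpose_mat E * transpose_mat U"
proof -
  have "E * transpose_mat W \<in> carrier_mat b d" using assms by auto
  then show ?thesis
    using assms by (simp add: transpose_mult[of _ a b _ d] transpose_mult[of _ b c _ d])
qed

lemma sandwich_mult:
  fixes U E V F W :: "'a::comm_ring_1 mat"
  assumes "U \<in> carrier_mat a b" "E \<in> carrier_mat b c" "V \<in> carrier_mat d c"
    and VV: "transpose_mat V * V = 1\<^sub>m c"
    and "F \<in> carrier_mat c e" "W \<in> carrier_mat f e"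
  shows "(U * E * transpose_mat V) * (V * F * transpose_mat W) = U * (E * F) * transpose_mat W"
proof -
  have cancel: "transpose_mat V * (V * Y) = Y" if "Y \<in> carrier_mat c f" for Y
    using assoc_mult_mat[of "transpose_mat V" c d V c Y f] that assms VV by simp
  have "E * transpose_mat V \<in> carrier_mat b d" "F * transpose_mat W \<in> carrier_mat c f"
    "E * F \<in> carrier_mat b e" "U * (E * transpose_mat V) \<in> carrier_mat a d"
    "V * (F * transpose_mat W) \<in> carrier_mat d f"
    using assms by auto
  then show ?thesis
    using assms by (simp (no_asm_simp) add: cancel)
qed

lemma sandwich_minus:
  fixes U A B W :: "'a::comm_ring_1 mat"
  assumes "U \<in> carrier_mat a b" "A \<in> carrier_mat b c" "B \<in> carrier_mat b c" "W \<in> carrier_mat d c"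
  shows "U * A * transpose_mat W - U * B * transpose_mat W = U * (A - B) * transpose_mat W"
  using assms by (simp add: mult_minus_distrib_mat[of U a b A c B]
      minus_mult_distrib_mat[of "U * A" a c "U * B" "transpose_mat W" d])

lemma penrose_mult_right_unique:
  assumes P1: "penrose A B1" and P2: "penrose A B2"
  shows "A * B1 = A * B2"
proof -
  obtain r c where A: "A \<in> carrier_mat r c" by blast
  have B1: "B1 \<in> carrier_mat c r" and B2: "B2 \<in> carrier_mat c r"
    and ABA1: "A * B1 * A = A" and AB1: "transpose_mat (A * B1) = A * B1"
    and ABA2: "A * B2 * A = A" and AB2: "transpose_mat (A * B2) = A * B2"
    using P1 P2 A unfolding penrose_def by auto
  have "A * B1 = (A * B2 * A) * B1" by (simp only: ABA2)
  also have "\<dots> = (A * B2) * (A * B1)"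
    using A B1 B2 by (simp only: assoc_mult_mat[of "A * B2" r r A c B1 r] mult_carrier_mat)
  also have "\<dots> = transpose_mat (A * B1 * (A * B2))"
    using A B1 B2 by (simp only: AB1 AB2 transpose_mult[of "A * B1" r r "A * B2" r] mult_carrier_mat)
  also have "A * B1 * (A * B2) = A * B1 * A * B2"
    using A B1 B2 by (simp only: assoc_mult_mat[of "A * B1" r r A c B2 r] mult_carrier_mat)
  finally show ?thesis by (simp only: ABA1 AB2)
qed

lemma penrose_mult_left_unique:
  assumes P1: "penrose A B1" and P2: "penrose A B2"
  shows "B1 * A = B2 * A"
proof -
  obtain r c where A: "A \<in> carrier_mat r c" by blast
  have B1: "B1 \<in> carrier_mat c r" and B2: "B2 \<in> carrier_mat c r"
    and ABA1: "A * B1 * A = A" and BA1: "transpose_mat (B1 * A) = B1 * A"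
    and ABA2: "A * B2 * A = A" and BA2: "transpose_mat (B2 * A) = B2 * A"
    using P1 P2 A unfolding penrose_def by auto
  have "B1 * A = B1 * (A * B2 * A)" by (simp only: ABA2)
  also have "\<dots> = (B1 * A) * (B2 * A)"
    using A B1 B2 by (simp only: assoc_mult_mat[of B1 c r A c "B2 * A" c] assoc_mult_mat[of A r c B2 r A c]
        mult_carrier_mat)
  also have "\<dots> = transpose_mat (B2 * A * (B1 * A))"
    using A B1 B2 by (simp only: BA1 BA2 transpose_mult[of "B2 * A" c c "B1 * A" c] mult_carrier_mat)
  also have "B2 * A * (B1 * A) = B2 * (A * B1 * A)"
    using A B1 B2 by (simp only: assoc_mult_mat[of B2 c r A c "B1 * A" c] assoc_mult_mat[of A r c B1 r A c]
        mult_carrier_mat)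
  finally show ?thesis by (simp only: ABA1 BA2)
qed

lemma penrose_unique:
  assumes P1: "penrose A B1" and P2: "penrose A B2"
  shows "B1 = B2"
proof -
  obtain r c where A: "A \<in> carrier_mat r c" by blast
  have B1: "B1 \<in> carrier_mat c r" and B2: "B2 \<in> carrier_mat c r"
    and BAB1: "B1 * A * B1 = B1" and BAB2: "B2 * A * B2 = B2"
    using P1 P2 A unfolding penrose_def by auto
  have "B1 = B1 * A * B1" by (simp only: BAB1)
  also have "\<dots> = B2 * (A * B1)"
    using A B1 B2 by (simp only: penrose_mult_left_unique[OF P1 P2] assoc_mult_mat[of B2 c r A c B1 r])
  also have "\<dots> = B2 * A * B2"
    using A B2 by (simp only: penrose_mult_right_unique[OF P1 P2] assoc_mult_mat[of B2 c r A c B2 r])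
  finally show ?thesis by (simp only: BAB2)
qed

lemma pinv_eqI: "penrose A B \<Longrightarrow> pinv A = B"
  unfolding pinv_def by (rule the_equality) (auto intro: penrose_unique)

lemma penrose_diag_rect:
  "penrose (diag_rect r c d) (diag_rect c r (\<lambda>i. inverse (d i)))"
proof -
  have "x * inverse x * x = x" "inverse x * x * inverse x = inverse x" for x :: real
    by (cases "x = 0"; simp)+
  then show ?thesis
    unfolding penrose_def diag_rect_mult transpose_diag_rect
    by (auto intro!: diag_rect_cong)
qed

lemma penrose_orthogonal_sandwich:
  assumes U: "orthogonal_mat r U" and V: "orthogonal_mat c V"
    and A: "A \<in> carrier_mat r c" and P: "penrose A B"
  shows "penrose (U * A * transpose_mat V) (V * B * transpose_mat U)"
proof -
  have Ur: "U \<in> carrier_mat r r" and UU: "transpose_mat U * U = 1\<^sub>m r"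
    and Vc: "V \<in> carrier_mat c c" and VV: "transpose_mat V * V = 1\<^sub>m c"
    using U V by (auto simp: orthogonal_mat_def)
  have B: "B \<in> carrier_mat c r" and ABA: "A * B * A = A" and BAB: "B * A * B = B"
    and AB: "transpose_mat (A * B) = A * B" and BA: "transpose_mat (B * A) = B * A"
    using P A unfolding penrose_def by auto
  have AB': "(U * A * transpose_mat V) * (V * B * transpose_mat U) = U * (A * B) * transpose_mat U"
    by (rule sandwich_mult[OF Ur A _ VV B Ur]) (use Vc in simp)
  have BA': "(V * B * transpose_mat U) * (U * A * transpose_mat V) = V * (B * A) * transpose_mat V"
    by (rule sandwich_mult[OF Vc B _ UU A Vc]) (use Ur in simp)
  have "(U * (A * B) * transpose_mat U) * (U * A * transpose_mat V) = U * A * transpose_mat V"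
    using sandwich_mult[OF Ur _ Ur UU A Vc, of "A * B"] A B ABA by simp
  moreover have "(V * (B * A) * transpose_mat V) * (V * B * transpose_mat U) = V * B * transpose_mat U"
    using sandwich_mult[OF Vc _ Vc VV B Ur, of "B * A"] A B BAB by simp
  moreover have "transpose_mat (U * (A * B) * transpose_mat U) = U * (A * B) * transpose_mat U"
    using transpose_sandwich[OF Ur _ Ur, of "A * B"] A B AB by simp
  moreover have "transpose_mat (V * (B * A) * transpose_mat V) = V * (B * A) * transpose_mat V"
    using transpose_sandwich[OF Vc _ Vc, of "B * A"] A B BA by simp
  ultimately show ?thesis
    unfolding penrose_def AB' BA' using Ur Vc B by auto
qed

lemma gram_orthogonal_sandwich:
  assumes U: "orthogonal_mat r U" and V: "orthogonal_mat c V"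
    and X: "X = U * diag_rect r c \<sigma> * transpose_mat V"
  shows "transpose_mat X * X
    = V * diag_rect c c (\<lambda>i. if i < r then \<sigma> i * \<sigma> i else 0) * transpose_mat V"
proof -
  have Ur: "U \<in> carrier_mat r r" and UU: "transpose_mat U * U = 1\<^sub>m r"
    and Vc: "V \<in> carrier_mat c c"
    using U V by (auto simp: orthogonal_mat_def)
  have "transpose_mat X = V * diag_rect c r \<sigma> * transpose_mat U"
    using transpose_sandwich[OF Ur diag_rect_carrier Vc] X by (simp add: transpose_diag_rect)
  then have "transpose_mat X * X = V * (diag_rect c r \<sigma> * diag_rect r c \<sigma>) * transpose_mat V"
    using sandwich_mult[OF Vc diag_rect_carrier Ur UU diag_rect_carrier Vc] X by simp
  then show ?thesis by (simp add: diag_rect_mult)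
qed

lemma pinv_gram_orthogonal_sandwich:
  assumes U: "orthogonal_mat r U" and V: "orthogonal_mat c V"
    and X: "X = U * diag_rect r c \<sigma> * transpose_mat V"
  shows "pinv (transpose_mat X * X)
    = V * diag_rect c c (\<lambda>i. if i < r then inverse (\<sigma> i * \<sigma> i) else 0) * transpose_mat V"
proof -
  have "diag_rect c c (\<lambda>i. if i < r then inverse (\<sigma> i * \<sigma> i) else 0)
      = diag_rect c c (\<lambda>i. inverse (if i < r then \<sigma> i * \<sigma> i else 0))"
    by (rule diag_rect_cong) simp
  then show ?thesis
    using penrose_orthogonal_sandwich[OF V V diag_rect_carrier penrose_diag_rect]
    by (simp add: gram_orthogonal_sandwich[OF U V X] pinv_eqI)
qed

lemma filtered_orthogonal_sandwich:
  assumes U: "orthogonal_mat r U" and V: "orthogonal_mat c V"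
    and X: "X = U * diag_rect r c \<sigma> * transpose_mat V"
  shows "filtered X \<sigma> V k = U * diag_rect r c (\<lambda>i. if c - k \<le> i then \<sigma> i else 0) * transpose_mat V"
proof -
  have Ur: "U \<in> carrier_mat r r" and Vc: "V \<in> carrier_mat c c" and VV: "transpose_mat V * V = 1\<^sub>m c"
    using U V by (auto simp: orthogonal_mat_def)
  define S D L where "S = diag_rect r c \<sigma>"
    and "D = diag_rect c c (\<lambda>i. if i < r then inverse (\<sigma> i * \<sigma> i) else 0)"
    and "L = L_mat c \<sigma> k * L_mat c \<sigma> k"
  have SDL: "S \<in> carrier_mat r c" "D \<in> carrier_mat c c" "L \<in> carrier_mat c c"
    by (simp_all add: S_def D_def L_def L_mat_def diag_rect_mult)
  have "dim_col X = c" using X Ur Vc by simp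
  then have "filtered X \<sigma> V k = U * S * transpose_mat V * (V * D * transpose_mat V) * (V * L * transpose_mat V)"
    unfolding filtered_def gram_trunc_def pinv_gram_orthogonal_sandwich[OF U V X]
    by (simp only: X S_def D_def L_def)
  also have "\<dots> = U * (S * D * L) * transpose_mat V"
    using SDL by (simp add: sandwich_mult[OF Ur _ Vc VV _ Vc])
  also have "S * D * L = diag_rect r c (\<lambda>i. if c - k \<le> i then \<sigma> i else 0)"
    \<comment> \<open>\<open>\<sigma> (\<sigma>\<^sup>2)\<^sup>+ \<sigma>\<^sup>2 = \<sigma>\<close> also for \<open>\<sigma> = 0\<close>, thanks to \<open>inverse 0 = 0\<close>\<close>
    unfolding S_def D_def L_def L_mat_def diag_rect_mult
    by (rule diag_rect_cong) (auto simp: field_simps)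
  finally show ?thesis .
qed

lemma sandwich_diag_rect_orthogonal:
  assumes U: "orthogonal_mat r U" and W: "W \<in> carrier_mat k c"
    and de: "\<And>i. i < r \<Longrightarrow> i < c \<Longrightarrow> d i * e i = 0"
  shows "transpose_mat (U * diag_rect r c d * transpose_mat W) * (U * diag_rect r c e * transpose_mat W)
    = 0\<^sub>m k k"
proof -
  have Ur: "U \<in> carrier_mat r r" and UU: "transpose_mat U * U = 1\<^sub>m r"
    using U by (auto simp: orthogonal_mat_def)
  have "diag_rect c r d * diag_rect r c e = 0\<^sub>m c c"
    unfolding diag_rect_mult by (rule eq_matI) (auto simp: diag_rect_def de)
  then show ?thesis
    using transpose_sandwich[OF Ur diag_rect_carrier W] W
      sandwich_mult[OF W diag_rect_carrier Ur UU diag_rect_carrier W]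
    by (simp add: transpose_diag_rect)
qed

lemma filtered_diff_orthogonal:
  assumes U: "orthogonal_mat r U" and V: "orthogonal_mat c V"
    and X: "X = U * diag_rect r c \<sigma> * transpose_mat V"
    and "m \<le> n" "n \<le> p" "p \<le> q"
  shows "transpose_mat (filtered X \<sigma> V m - filtered X \<sigma> V n) * (filtered X \<sigma> V p - filtered X \<sigma> V q)
    = 0\<^sub>m c c"
proof -
  have Ur: "U \<in> carrier_mat r r" and Vc: "V \<in> carrier_mat c c"
    using U V by (auto simp: orthogonal_mat_def)
  define t where "t k i = (if c - k \<le> i then \<sigma> i else 0)" for k i
  have diff: "filtered X \<sigma> V k - filtered X \<sigma> V l = U * diag_rect r c (\<lambda>i. t k i - t l i) * transpose_mat V"
    for k l
    unfolding filtered_orthogonal_sandwich[OF U V X] t_def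
    by (simp add: sandwich_minus[OF Ur _ _ Vc] diag_rect_minus)
  have "(t m i - t n i) * (t p i - t q i) = 0" for i
    using assms(4-6) by (auto simp: t_def)
  then show ?thesis
    unfolding diff by (rule sandwich_diag_rect_orthogonal[OF U Vc])
qed

lemma filtered_diff_orthogonal_svd:
  assumes "is_svd X U \<sigma> V" and "m \<le> n" "n \<le> p" "p \<le> q"
  shows "transpose_mat (filtered X \<sigma> V m - filtered X \<sigma> V n) * (filtered X \<sigma> V p - filtered X \<sigma> V q)
    = 0\<^sub>m (dim_col X) (dim_col X)"
  using assms by (intro filtered_diff_orthogonal) (auto simp: is_svd_def)

theorem mainTheorem3:
  fixes N NS NL :: nat and cp cm va vb :: "nat \<Rightarrow> nat"
    and US VS UL VL :: "real mat" and \<sigma>S \<sigma>L :: "nat \<Rightarrow> real"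
  assumes mesh: "closed_tri_mesh N NS NL cp cm va vb"
    and svdS: "is_svd (star_mat N NS cp cm) US \<sigma>S VS"
    and svdL: "is_svd (loop_mat N NL va vb) UL \<sigma>L VL"
  shows "(\<forall>m n p q :: nat. 1 \<le> m \<and> m < n \<and> n < p \<and> p < q \<and> q \<le> NS \<longrightarrow>
           transpose_mat (filtered (star_mat N NS cp cm) \<sigma>S VS m - filtered (star_mat N NS cp cm) \<sigma>S VS n)
             * (filtered (star_mat N NS cp cm) \<sigma>S VS p - filtered (star_mat N NS cp cm) \<sigma>S VS q)
           = 0\<^sub>m NS NS)
       \<and> (\<forall>m n p q :: nat. 1 \<le> m \<and> m < n \<and> n < p \<and> p < q \<and> q \<le> NL \<longrightarrow>
           transpose_mat (filtered (loop_mat N NL va vb) \<sigma>L VL m - filtered (loop_mat N NL va vb) \<sigma>L VL n)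
             * (filtered (loop_mat N NL va vb) \<sigma>L VL p - filtered (loop_mat N NL va vb) \<sigma>L VL q)
           = 0\<^sub>m NL NL)"
proof -
  have "dim_col (star_mat N NS cp cm) = NS" "dim_col (loop_mat N NL va vb) = NL"
    by (simp_all add: star_mat_def loop_mat_def)
  then show ?thesis
    by (simp add: filtered_diff_orthogonal_svd[OF svdS] filtered_diff_orthogonal_svd[OF svdL])
qed

end
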